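(* Let $r\ge4$, $l\ge r$, $\alpha,\beta\in\mathbb N$ with $\alpha+\beta=l-(r-2)$, and let $(X(N_G,\Delta_G),\mathrm{orb}(\sigma_0))$ be the Gorenstein cyclic quotient singularity of type $\frac1l(1,\ldots,1,\alpha,\beta)$ (with $r-2$ weights equal to $1$). If this singularity admits a $T_{N_G}$-equivariant, crepant, full resolution, then $\gcd(\alpha,\beta,l)\in\{1,r-2\}$. Moreover, if $\gcd(\alpha,\beta,l)=1$, then $[\mathfrak t_1]_{r-2}=[\mathfrak t_2]_{r-2}=1$, where $\mathfrak t_1=\gcd(\alpha,l)$ and $\mathfrak t_2=\gcd(\beta,l)=\gcd(\alpha+(r-2),l)$.
   Context: For integers $\mu$ and $\nu\ge1$, $[\mu]_\nu$ is the unique integer in $\{0,\ldots,\nu-1\}$ congruent to $\mu$ mod $\nu$. Type $\frac1l(\alpha_1,\ldots,\alpha_r)$: $G\subset\mathrm{GL}(r,\mathbb C)$ is generated by $\mathrm{diag}(\zeta^{\alpha_1},\ldots,\zeta^{\alpha_r})$, $\zeta=e^{2\pi\sqrt{-1}/l}$; $N_G=\mathbb Z^r+\mathbb Z\frac1l(\alpha_1,\ldots,\alpha_r)^{\intercal}$, $\sigma_0$ the positive orthant of $\mathbb R^r$, $\Delta_G$ its face fan, $X(N_G,\Delta_G)=\mathbb C^r/G$ with torus $T_{N_G}$. A crepant $T_{N_G}$-equivariant full resolution is a proper birational toric morphism from a smooth toric variety given by a refinement of $\Delta_G$, with trivial discrepancy. *)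

theory Defs
  imports Complex_Main
begin

text \<open>Vectors of R^r are modelled as functions nat => real vanishing at indices >= r.\<close>

definition vsp :: "nat \<Rightarrow> (nat \<Rightarrow> real) set" where
  "vsp r = {v. \<forall>i\<ge>r. v i = 0}"

definition zero_vec :: "nat \<Rightarrow> real" where
  "zero_vec = (\<lambda>i. 0)"

definition pairing :: "nat \<Rightarrow> (nat \<Rightarrow> real) \<Rightarrow> (nat \<Rightarrow> real) \<Rightarrow> real" where
  "pairing r m v = (\<Sum>i<r. m i * v i)"

definition type_weights :: "nat \<Rightarrow> nat \<Rightarrow> nat \<Rightarrow> nat \<Rightarrow> nat" where
  "type_weights r \<alpha> \<beta> i =
     (if i < r - 2 then 1 else if i = r - 2 then \<alpha> else if i = r - 1 then \<beta> else 0)"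

definition lattice_NG :: "nat \<Rightarrow> nat \<Rightarrow> (nat \<Rightarrow> nat) \<Rightarrow> (nat \<Rightarrow> real) set" where
  "lattice_NG r l a = {v \<in> vsp r. \<exists>k::int. \<forall>i<r.
       v i - real_of_int k * real (a i) / real l \<in> \<int>}"

definition pos_orthant :: "nat \<Rightarrow> (nat \<Rightarrow> real) set" where
  "pos_orthant r = {v \<in> vsp r. \<forall>i<r. 0 \<le> v i}"

definition cone_gen :: "(nat \<Rightarrow> real) set \<Rightarrow> (nat \<Rightarrow> real) set" where
  "cone_gen S = {v. \<exists>c. (\<forall>s\<in>S. 0 \<le> c s) \<and> v = (\<lambda>i. \<Sum>s\<in>S. c s * s i)}"

definition cone_face :: "nat \<Rightarrow> (nat \<Rightarrow> real) set \<Rightarrow> (nat \<Rightarrow> real) set \<Rightarrow> bool" where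
  "cone_face r \<tau> \<sigma> \<longleftrightarrow> (\<exists>u\<in>vsp r. (\<forall>v\<in>\<sigma>. 0 \<le> pairing r u v) \<and>
       \<tau> = \<sigma> \<inter> {v. pairing r u v = 0})"

definition rational_cone :: "(nat \<Rightarrow> real) set \<Rightarrow> (nat \<Rightarrow> real) set \<Rightarrow> bool" where
  "rational_cone N \<sigma> \<longleftrightarrow> (\<exists>S. finite S \<and> S \<subseteq> N \<and> \<sigma> = cone_gen S)"

definition strongly_convex :: "(nat \<Rightarrow> real) set \<Rightarrow> bool" where
  "strongly_convex \<sigma> \<longleftrightarrow> (\<forall>v. v \<in> \<sigma> \<and> (\<lambda>i. - v i) \<in> \<sigma> \<longrightarrow> v = zero_vec)"

definition is_fan :: "nat \<Rightarrow> (nat \<Rightarrow> real) set \<Rightarrow> (nat \<Rightarrow> real) set set \<Rightarrow> bool" where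
  "is_fan r N \<Delta> \<longleftrightarrow> finite \<Delta> \<and>
     (\<forall>\<sigma>\<in>\<Delta>. rational_cone N \<sigma> \<and> strongly_convex \<sigma> \<and> (\<forall>\<tau>. cone_face r \<tau> \<sigma> \<longrightarrow> \<tau> \<in> \<Delta>)) \<and>
     (\<forall>\<sigma>\<in>\<Delta>. \<forall>\<tau>\<in>\<Delta>. cone_face r (\<sigma> \<inter> \<tau>) \<sigma> \<and> cone_face r (\<sigma> \<inter> \<tau>) \<tau>)"

definition face_fan :: "nat \<Rightarrow> (nat \<Rightarrow> real) set \<Rightarrow> (nat \<Rightarrow> real) set set" where
  "face_fan r \<sigma> = {\<tau>. cone_face r \<tau> \<sigma>}"

text \<open>Refinement with the same support (proper birational toric morphism).\<close>

definition refines :: "(nat \<Rightarrow> real) set set \<Rightarrow> (nat \<Rightarrow> real) set set \<Rightarrow> bool" where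
  "refines \<Delta> \<Delta>' \<longleftrightarrow> (\<forall>\<sigma>\<in>\<Delta>. \<exists>\<tau>\<in>\<Delta>'. \<sigma> \<subseteq> \<tau>) \<and> \<Union>\<Delta> = \<Union>\<Delta>'"

definition lattice_basis :: "(nat \<Rightarrow> real) set \<Rightarrow> (nat \<Rightarrow> real) set \<Rightarrow> bool" where
  "lattice_basis N B \<longleftrightarrow> finite B \<and> B \<subseteq> N \<and>
     (\<forall>v\<in>N. \<exists>c::(nat \<Rightarrow> real) \<Rightarrow> int. v = (\<lambda>i. \<Sum>b\<in>B. real_of_int (c b) * b i)) \<and>
     (\<forall>c::(nat \<Rightarrow> real) \<Rightarrow> real. (\<lambda>i. \<Sum>b\<in>B. c b * b i) = zero_vec \<longrightarrow> (\<forall>b\<in>B. c b = 0))"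

definition smooth_fan :: "(nat \<Rightarrow> real) set \<Rightarrow> (nat \<Rightarrow> real) set set \<Rightarrow> bool" where
  "smooth_fan N \<Delta> \<longleftrightarrow> (\<forall>\<sigma>\<in>\<Delta>. \<exists>B S. lattice_basis N B \<and> S \<subseteq> B \<and> \<sigma> = cone_gen S)"

definition is_ray :: "(nat \<Rightarrow> real) set \<Rightarrow> bool" where
  "is_ray \<rho> \<longleftrightarrow> (\<exists>u. u \<noteq> zero_vec \<and> \<rho> = cone_gen {u})"

definition prim_gen :: "(nat \<Rightarrow> real) set \<Rightarrow> (nat \<Rightarrow> real) set \<Rightarrow> (nat \<Rightarrow> real) \<Rightarrow> bool" where
  "prim_gen N \<rho> u \<longleftrightarrow> u \<in> N \<and> u \<noteq> zero_vec \<and> \<rho> = cone_gen {u} \<and>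
     (\<forall>v\<in>\<rho> \<inter> N. \<exists>k::nat. v = (\<lambda>i. real k * u i))"

text \<open>The canonical divisor -K = sum of the toric prime
  divisors of X(N,Delta_G) is given on sigma_0 by a linear form m with m(u_rho) = 1 for
  the primitive generators of the rays of sigma_0; the discrepancy of the toric divisor
  D_rho of the refinement is m(u_rho) - 1.\<close>

definition crepant :: "nat \<Rightarrow> (nat \<Rightarrow> real) set \<Rightarrow> (nat \<Rightarrow> real) set set \<Rightarrow> (nat \<Rightarrow> real) set set \<Rightarrow> bool" where
  "crepant r N \<Delta>G \<Delta> \<longleftrightarrow> (\<exists>m\<in>vsp r.
     (\<forall>\<rho>\<in>\<Delta>G. \<forall>u. is_ray \<rho> \<and> prim_gen N \<rho> u \<longrightarrow> pairing r m u = 1) \<and>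
     (\<forall>\<rho>\<in>\<Delta>. \<forall>u. is_ray \<rho> \<and> prim_gen N \<rho> u \<longrightarrow> pairing r m u - 1 = 0))"

definition has_crepant_full_resolution :: "nat \<Rightarrow> nat \<Rightarrow> (nat \<Rightarrow> nat) \<Rightarrow> bool" where
  "has_crepant_full_resolution r l a \<longleftrightarrow>
     (let N = lattice_NG r l a; \<Delta>G = face_fan r (pos_orthant r) in
      \<exists>\<Delta>. is_fan r N \<Delta> \<and> refines \<Delta> \<Delta>G \<and> smooth_fan N \<Delta> \<and> crepant r N \<Delta>G \<Delta>)"

end

theory Submission
  imports Defs
begin

text \<open>Write \<open>n = r - 2\<close>. Smoothness makes every lattice point \<open>v\<close> of the orthant a
  non-negative integral combination of generators of one cone of the resolution, and crepancy
  puts these generators on the hyperplane of coordinate sum 1 (age one). A summand \<open>s\<close> with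
  non-zero coefficient satisfies \<open>s \<le> v\<close>, and if the first \<open>n\<close> coordinates of \<open>v\<close> are
  below 1, those of \<open>s\<close> are equal, as they agree modulo \<open>\<int>\<close>.

  For \<open>g = gcd (gcd \<alpha> \<beta>) l \<ge> 2\<close> take \<open>v = (1/g, \<dots>, 1/g, 0, 0)\<close>: a summand is
  \<open>(1/n, \<dots>, 1/n, 0, 0)\<close>, whose lattice membership forces \<open>n dvd g\<close>, while \<open>g dvd n\<close> since
  \<open>\<alpha> + \<beta> + n = l\<close>. For \<open>t = gcd \<alpha> l\<close> take the lattice point \<open>v\<close> with first \<open>n\<close>
  coordinates \<open>(t - 1)/t\<close>, then \<open>0, n/t\<close>: the coefficients sum to \<open>n\<close>, and each summand has
  \<open>t s\<^sub>0 \<le> t div n\<close>, so \<open>t - 1 \<le> n (t div n)\<close>, i.e. \<open>t mod n \<le> 1\<close>; the same for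
  \<open>gcd \<beta> l\<close>. If \<open>g = 1\<close>, then \<open>n\<close> does not divide \<open>t\<close>, so \<open>t mod n = 1\<close>.\<close>

abbreviation lincomb :: "((nat \<Rightarrow> real) \<Rightarrow> real) \<Rightarrow> (nat \<Rightarrow> real) set \<Rightarrow> nat \<Rightarrow> real" where
  "lincomb x S \<equiv> (\<lambda>i. \<Sum>s\<in>S. x s * s i)"

definition unit_vec :: "nat \<Rightarrow> nat \<Rightarrow> real" where
  "unit_vec i = (\<lambda>j. if j = i then 1 else 0)"

lemma unit_vec_in_lattice_NG: "i < r \<Longrightarrow> unit_vec i \<in> lattice_NG r l a"
  unfolding lattice_NG_def vsp_def unit_vec_def by (auto intro!: exI[of _ 0])

lemma lattice_NG_subset_vsp: "lattice_NG r l a \<subseteq> vsp r"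
  unfolding lattice_NG_def by auto

lemma lattice_NG_memI:
  assumes "v \<in> vsp r" and "\<And>i. i < r \<Longrightarrow> v i - of_int k * real (a i) / real l \<in> \<int>"
  shows "v \<in> lattice_NG r l a"
  using assms unfolding lattice_NG_def by blast

lemma vsp_eq_sum_unit_vec:
  assumes "w \<in> vsp r"
  shows "w = (\<lambda>j. \<Sum>i<r. w i * unit_vec i j)"
proof
  fix j
  show "w j = (\<Sum>i<r. w i * unit_vec i j)"
    using assms by (cases "j < r") (simp_all add: unit_vec_def vsp_def if_distrib cong: if_cong)
qed

lemma pairing_unit_vec: "i < r \<Longrightarrow> pairing r m (unit_vec i) = m i"
  unfolding pairing_def unit_vec_def by (simp add: if_distrib cong: if_cong)

lemma pairing_scale: "pairing r m (\<lambda>i. c * w i) = c * pairing r m w"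
  unfolding pairing_def by (simp add: sum_distrib_left mult_ac)

lemma mem_cone_gen_singleton: "w \<in> cone_gen {s} \<longleftrightarrow> (\<exists>c\<ge>0. w = (\<lambda>i. c * s i))"
  unfolding cone_gen_def by (auto intro: exI[of _ "\<lambda>_. _"])

lemma lincomb_indicator:
  assumes "finite S" and "s \<in> S"
  shows "lincomb (\<lambda>s'. if s' = s then c else 0) S = (\<lambda>i. c * s i)"
proof
  fix i
  have "(\<Sum>s'\<in>S. (if s' = s then c else 0) * s' i) = (\<Sum>s'\<in>S. if s' = s then c * s i else 0)"
    by (intro sum.cong) auto
  then show "(\<Sum>s'\<in>S. (if s' = s then c else 0) * s' i) = c * s i"
    using assms by simp
qed

lemma lincomb_restrict:
  assumes "finite B" and "S \<subseteq> B"
  shows "lincomb (\<lambda>b. if b \<in> S then x b else 0) B = lincomb x S"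
proof
  fix i
  have "(\<Sum>b\<in>B. (if b \<in> S then x b else 0) * b i) = (\<Sum>b\<in>B. if b \<in> S then x b * b i else 0)"
    by (intro sum.cong) auto
  also have "\<dots> = (\<Sum>b\<in>B \<inter> S. x b * b i)"
    using assms(1) by (simp add: sum.inter_restrict)
  finally show "(\<Sum>b\<in>B. (if b \<in> S then x b else 0) * b i) = (\<Sum>s\<in>S. x s * s i)"
    using assms(2) by (simp add: Int_absorb1)
qed

lemma coord_le_nat_lincomb:
  assumes "finite S" "s \<in> S" "c s \<noteq> 0" and "\<And>s'. s' \<in> S \<Longrightarrow> 0 \<le> s' i"
  shows "s i \<le> lincomb (\<lambda>s. real (c s)) S i"
proof -
  have "s i \<le> real (c s) * s i"
    using assms(3) assms(4)[OF assms(2)] by (simp add: mult_le_cancel_right1)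
  also have "\<dots> \<le> (\<Sum>s'\<in>S. real (c s') * s' i)"
    using assms by (intro member_le_sum) auto
  finally show ?thesis .
qed

lemma coord_sum_nat_lincomb:
  assumes "\<And>s. s \<in> S \<Longrightarrow> (\<Sum>i<r. s i) = 1"
  shows "(\<Sum>i<r. lincomb (\<lambda>s. real (c s)) S i) = (\<Sum>s\<in>S. real (c s))"
proof -
  have "(\<Sum>i<r. lincomb (\<lambda>s. real (c s)) S i) = (\<Sum>s\<in>S. real (c s) * (\<Sum>i<r. s i))"
    by (simp add: sum_distrib_left sum.swap[of _ S])
  also have "\<dots> = (\<Sum>s\<in>S. real (c s))" using assms by simp
  finally show ?thesis .
qed

lemma cone_face_refl: "cone_face r \<sigma> \<sigma>"
  unfolding cone_face_def
  by (intro bexI[of _ zero_vec]) (auto simp: pairing_def zero_vec_def vsp_def)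

lemma Union_face_fan: "\<Union>(face_fan r \<sigma>) = \<sigma>"
  using cone_face_refl[of r \<sigma>] unfolding face_fan_def cone_face_def by blast

lemma cone_face_unit_ray:
  assumes "i < r"
  shows "cone_face r (cone_gen {unit_vec i}) (pos_orthant r)"
proof -
  define m where "m = (\<lambda>j. if j < r \<and> j \<noteq> i then 1 else 0 :: real)"
  have pairing_m: "pairing r m v = (\<Sum>j\<in>{..<r} - {i}. v j)" for v
  proof -
    have "pairing r m v = (\<Sum>j\<in>{..<r} - {i}. m j * v j)"
      unfolding pairing_def by (rule sum.mono_neutral_right) (auto simp: m_def)
    also have "\<dots> = (\<Sum>j\<in>{..<r} - {i}. v j)"
      by (intro sum.cong) (auto simp: m_def)
    finally show ?thesis .
  qed
  have "cone_gen {unit_vec i} = pos_orthant r \<inter> {v. pairing r m v = 0}"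
  proof (intro set_eqI iffI)
    fix w assume "w \<in> cone_gen {unit_vec i}"
    then obtain c where "c \<ge> 0" and w: "w = (\<lambda>j. c * unit_vec i j)"
      unfolding mem_cone_gen_singleton by blast
    then have "w \<in> pos_orthant r"
      using assms by (auto simp: pos_orthant_def vsp_def unit_vec_def)
    moreover have "pairing r m w = 0"
      unfolding pairing_m w unit_vec_def by (intro sum.neutral) auto
    ultimately show "w \<in> pos_orthant r \<inter> {v. pairing r m v = 0}" by blast
  next
    fix w assume w: "w \<in> pos_orthant r \<inter> {v. pairing r m v = 0}"
    then have "\<forall>j\<in>{..<r} - {i}. w j = 0"
      using sum_nonneg_eq_0_iff[of "{..<r} - {i}" w] by (simp add: pairing_m pos_orthant_def)
    then have "w j = w i * unit_vec i j" for j
      using w by (cases "j = i"; cases "j < r") (auto simp: pos_orthant_def vsp_def unit_vec_def)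
    then have "w = (\<lambda>j. w i * unit_vec i j)" by (rule ext)
    moreover have "w i \<ge> 0" using w assms by (simp add: pos_orthant_def)
    ultimately show "w \<in> cone_gen {unit_vec i}"
      unfolding mem_cone_gen_singleton by blast
  qed
  moreover have "m \<in> vsp r"
    by (simp add: m_def vsp_def)
  moreover have "\<forall>v\<in>pos_orthant r. 0 \<le> pairing r m v"
    unfolding pairing_m pos_orthant_def by (auto intro: sum_nonneg)
  ultimately show ?thesis
    unfolding cone_face_def by (intro bexI[of _ m]) auto
qed

text \<open>The second coordinate of weight 1 rules out lattice points of the form \<open>c * unit_vec i\<close>
  with non-integral \<open>c\<close>, i.e. pseudo-reflections in \<open>G\<close>.\<close>

lemma prim_gen_unit_vec:
  assumes "i < r" "j < r" "j \<noteq> i" "a j = 1"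
  shows "prim_gen (lattice_NG r l a) (cone_gen {unit_vec i}) (unit_vec i)"
  unfolding prim_gen_def
proof (intro conjI ballI)
  show "unit_vec i \<in> lattice_NG r l a" using unit_vec_in_lattice_NG[OF assms(1)] .
  show "unit_vec i \<noteq> zero_vec" unfolding unit_vec_def zero_vec_def by (metis zero_neq_one)
  fix w assume "w \<in> cone_gen {unit_vec i} \<inter> lattice_NG r l a"
  then obtain c k where c: "c \<ge> 0" "w = (\<lambda>j. c * unit_vec i j)"
    and k: "\<forall>j<r. w j - of_int k * real (a j) / real l \<in> \<int>"
    by (auto simp: mem_cone_gen_singleton lattice_NG_def)
  have "- (of_int k / real l) \<in> \<int>"
    using k assms(2-4) c(2) by (auto simp: unit_vec_def)
  then have "of_int k * real (a i) / real l \<in> \<int>"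
    by (metis Ints_minus Ints_mult Ints_of_nat minus_minus times_divide_eq_left)
  moreover have "c - of_int k * real (a i) / real l \<in> \<int>"
    using k assms(1) c(2) by (auto simp: unit_vec_def)
  ultimately have "c \<in> \<int>" by (metis Ints_add diff_add_cancel)
  then obtain z :: int where "c = of_int z" by (auto elim: Ints_cases)
  then have "c = real (nat z)" using c(1) by simp
  then show "\<exists>k::nat. w = (\<lambda>j. real k * unit_vec i j)" using c(2) by blast
qed simp

lemma crepant_prim_gen_coord_sum:
  assumes crep: "crepant r (lattice_NG r l a) (face_fan r (pos_orthant r)) \<Delta>"
    and ones: "\<And>i. i < r \<Longrightarrow> \<exists>j<r. j \<noteq> i \<and> a j = 1"
    and \<rho>: "\<rho> \<in> \<Delta>" "is_ray \<rho>" "prim_gen (lattice_NG r l a) \<rho> u"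
  shows "(\<Sum>i<r. u i) = 1"
proof -
  obtain m where
    on_orthant: "\<forall>\<tau>\<in>face_fan r (pos_orthant r). \<forall>u. is_ray \<tau> \<and> prim_gen (lattice_NG r l a) \<tau> u
       \<longrightarrow> pairing r m u = 1" and
    on_\<Delta>: "\<forall>\<tau>\<in>\<Delta>. \<forall>u. is_ray \<tau> \<and> prim_gen (lattice_NG r l a) \<tau> u \<longrightarrow> pairing r m u - 1 = 0"
    using crep unfolding crepant_def by blast
  have "m i = 1" if "i < r" for i
  proof -
    have "is_ray (cone_gen {unit_vec i})"
      unfolding is_ray_def
      by (intro exI[of _ "unit_vec i"]) (simp add: unit_vec_def zero_vec_def fun_eq_iff)
    moreover have "prim_gen (lattice_NG r l a) (cone_gen {unit_vec i}) (unit_vec i)"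
      using ones[OF that] prim_gen_unit_vec[OF that] by blast
    moreover have "cone_gen {unit_vec i} \<in> face_fan r (pos_orthant r)"
      unfolding face_fan_def using cone_face_unit_ray[OF that] by simp
    ultimately show ?thesis using on_orthant pairing_unit_vec[OF that] by metis
  qed
  then have "pairing r m u = (\<Sum>i<r. u i)" unfolding pairing_def by simp
  then show ?thesis using on_\<Delta> \<rho> by auto
qed

lemma lattice_basis_dual:
  assumes basis: "lattice_basis N B" and N: "N \<subseteq> vsp r" "\<And>i. i < r \<Longrightarrow> unit_vec i \<in> N"
  obtains u where "\<And>x b. b \<in> B \<Longrightarrow> pairing r (u b) (lincomb x B) = x b"
proof -
  have B: "B \<subseteq> N"
    and span: "\<forall>v\<in>N. \<exists>c::(nat \<Rightarrow> real) \<Rightarrow> int. v = lincomb (\<lambda>b. of_int (c b)) B"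
    and indep: "\<And>c. lincomb c B = zero_vec \<Longrightarrow> \<forall>b\<in>B. c b = 0"
    using basis unfolding lattice_basis_def by auto
  have "\<forall>i. \<exists>c::(nat \<Rightarrow> real) \<Rightarrow> int. i < r \<longrightarrow> unit_vec i = lincomb (\<lambda>b. of_int (c b)) B"
    using span N(2) by blast
  then obtain e :: "nat \<Rightarrow> (nat \<Rightarrow> real) \<Rightarrow> int"
    where e: "\<And>i. i < r \<Longrightarrow> unit_vec i = lincomb (\<lambda>b. of_int (e i b)) B"
    by metis
  define u where "u b = (\<lambda>i. if i < r then real_of_int (e i b) else 0)" for b
  have "pairing r (u b) (lincomb x B) = x b" if "b \<in> B" for x b
  proof -
    define w where "w = lincomb x B"
    have pairing_u: "pairing r (u b') w = (\<Sum>i<r. w i * of_int (e i b'))" for b'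
      unfolding pairing_def u_def by (simp add: mult_ac)
    have "w \<in> vsp r" using B N(1) unfolding w_def vsp_def by (auto intro!: sum.neutral)
    then have "w = (\<lambda>j. \<Sum>i<r. w i * unit_vec i j)" by (rule vsp_eq_sum_unit_vec)
    also have "\<dots> = (\<lambda>j. \<Sum>i<r. w i * (\<Sum>b'\<in>B. of_int (e i b') * b' j))"
      using e by (intro ext sum.cong) auto
    also have "\<dots> = lincomb (\<lambda>b'. pairing r (u b') w) B"
      unfolding pairing_u
      by (simp add: sum_distrib_left sum_distrib_right mult_ac sum.swap[of _ B])
    finally have w_coords: "w = lincomb (\<lambda>b'. pairing r (u b') w) B" .
    have diff_zero: "lincomb (\<lambda>b'. x b' - pairing r (u b') w) B = zero_vec"
    proof
      fix j
      have "(\<Sum>b'\<in>B. (x b' - pairing r (u b') w) * b' j)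
          = w j - (\<Sum>b'\<in>B. pairing r (u b') w * b' j)"
        unfolding w_def by (simp add: left_diff_distrib sum_subtractf)
      also have "\<dots> = 0" using fun_cong[OF w_coords, of j] by simp
      finally show "(\<Sum>b'\<in>B. (x b' - pairing r (u b') w) * b' j) = zero_vec j"
        by (simp add: zero_vec_def)
    qed
    show ?thesis using indep[OF diff_zero] that unfolding w_def by simp
  qed
  then show ?thesis by (rule that)
qed

locale lattice_cone_coordinates =
  fixes r :: nat and N S :: "(nat \<Rightarrow> real) set" and u :: "(nat \<Rightarrow> real) \<Rightarrow> nat \<Rightarrow> real"
  assumes finite_gens: "finite S"
    and pairing_lincomb: "\<And>x b. b \<in> S \<Longrightarrow> pairing r (u b) (lincomb x S) = x b"
    and pairing_lattice: "\<And>b w. b \<in> S \<Longrightarrow> w \<in> N \<Longrightarrow> pairing r (u b) w \<in> \<int>"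

lemma lattice_basis_cone_coordinates:
  assumes basis: "lattice_basis N B" and "S \<subseteq> B"
    and N: "N \<subseteq> vsp r" "\<And>i. i < r \<Longrightarrow> unit_vec i \<in> N"
  obtains u where "lattice_cone_coordinates r N S u"
proof -
  have "finite B" using basis unfolding lattice_basis_def by blast
  obtain u where u: "\<And>x b. b \<in> B \<Longrightarrow> pairing r (u b) (lincomb x B) = x b"
    using lattice_basis_dual[OF basis N] by blast
  have "pairing r (u b) (lincomb x S) = x b" if "b \<in> S" for x b
    using u[of b "\<lambda>b. if b \<in> S then x b else 0"] that \<open>S \<subseteq> B\<close>
    by (simp add: lincomb_restrict[OF \<open>finite B\<close> \<open>S \<subseteq> B\<close>] subsetD)
  moreover have "pairing r (u b) w \<in> \<int>" if "b \<in> S" "w \<in> N" for b w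
  proof -
    obtain c :: "(nat \<Rightarrow> real) \<Rightarrow> int" where "w = lincomb (\<lambda>b. of_int (c b)) B"
      using basis \<open>w \<in> N\<close> unfolding lattice_basis_def by blast
    then show ?thesis using u[of b "\<lambda>b. of_int (c b)"] that \<open>S \<subseteq> B\<close> by auto
  qed
  ultimately show ?thesis
    using that \<open>finite B\<close> \<open>S \<subseteq> B\<close> finite_subset unfolding lattice_cone_coordinates_def by blast
qed

context lattice_cone_coordinates
begin

lemma gen_eq_lincomb: "s \<in> S \<Longrightarrow> s = lincomb (\<lambda>s'. if s' = s then 1 else 0) S"
  using lincomb_indicator[OF finite_gens, of s 1] by simp

lemma pairing_gen_self: "s \<in> S \<Longrightarrow> pairing r (u s) s = 1"
  using pairing_lincomb[of s "\<lambda>s'. if s' = s then 1 else 0"] gen_eq_lincomb[of s] by simp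

lemma gen_nonzero: "s \<in> S \<Longrightarrow> s \<noteq> zero_vec"
  using pairing_gen_self[of s] by (auto simp: pairing_def zero_vec_def)

lemma gen_in_cone: "s \<in> S \<Longrightarrow> s \<in> cone_gen S"
  unfolding cone_gen_def using gen_eq_lincomb[of s]
  by (intro CollectI exI[of _ "\<lambda>s'. if s' = s then 1 else 0"]) auto

lemma lattice_point_nat_coeffs:
  assumes "v \<in> cone_gen S" and "v \<in> N"
  obtains c :: "(nat \<Rightarrow> real) \<Rightarrow> nat" where "v = lincomb (\<lambda>s. real (c s)) S"
proof -
  obtain x where x: "\<forall>s\<in>S. 0 \<le> x s" and v: "v = lincomb x S"
    using assms(1) unfolding cone_gen_def by blast
  have "x s = real (nat \<lfloor>x s\<rfloor>)" if "s \<in> S" for s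
  proof -
    have "x s \<in> \<int>" using pairing_lattice[OF that assms(2)] pairing_lincomb[OF that] v by simp
    then show ?thesis using x that by (auto elim!: Ints_cases)
  qed
  then have "v = lincomb (\<lambda>s. real (nat \<lfloor>x s\<rfloor>)) S" unfolding v by (auto intro!: sum.cong)
  then show ?thesis by (rule that)
qed

lemma prim_gen_ray:
  assumes "s \<in> S" and "s \<in> N"
  shows "prim_gen N (cone_gen {s}) s"
  unfolding prim_gen_def
proof (intro conjI ballI)
  fix w assume w: "w \<in> cone_gen {s} \<inter> N"
  then obtain c where c: "c \<ge> 0" "w = (\<lambda>i. c * s i)" by (auto simp: mem_cone_gen_singleton)
  have "pairing r (u s) w = c" unfolding c(2) pairing_scale pairing_gen_self[OF assms(1)] by simp
  then have "c \<in> \<int>" using pairing_lattice[OF assms(1)] w by auto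
  then have "c = real (nat \<lfloor>c\<rfloor>)" using c(1) by (auto elim!: Ints_cases)
  then show "\<exists>k::nat. w = (\<lambda>i. real k * s i)" using c(2) by metis
qed (use assms gen_nonzero in auto)

text \<open>The face is cut out by the sum of the coordinate functionals of the other generators.\<close>

lemma cone_face_ray:
  assumes s: "s \<in> S"
  shows "cone_face r (cone_gen {s}) (cone_gen S)"
proof -
  define m where "m = (\<lambda>i. if i < r then \<Sum>b\<in>S - {s}. u b i else 0)"
  have pairing_m: "pairing r m (lincomb x S) = (\<Sum>b\<in>S - {s}. x b)" for x
  proof -
    have "pairing r m (lincomb x S) = (\<Sum>b\<in>S - {s}. pairing r (u b) (lincomb x S))"
      unfolding pairing_def m_def by (simp add: sum_distrib_right sum.swap[of _ "S - {s}"])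
    also have "\<dots> = (\<Sum>b\<in>S - {s}. x b)" using pairing_lincomb by (intro sum.cong) auto
    finally show ?thesis .
  qed
  have "cone_gen {s} = cone_gen S \<inter> {w. pairing r m w = 0}"
  proof (intro set_eqI iffI)
    fix w assume "w \<in> cone_gen {s}"
    then obtain c where "c \<ge> 0" and w: "w = (\<lambda>i. c * s i)" by (auto simp: mem_cone_gen_singleton)
    then have "w = lincomb (\<lambda>s'. if s' = s then c else 0) S"
      and "\<forall>s'\<in>S. 0 \<le> (if s' = s then c else 0)"
      using lincomb_indicator[OF finite_gens s] by auto
    then show "w \<in> cone_gen S \<inter> {w. pairing r m w = 0}"
      unfolding cone_gen_def using pairing_m by auto
  next
    fix w assume w: "w \<in> cone_gen S \<inter> {w. pairing r m w = 0}"
    then obtain x where x: "\<forall>s\<in>S. 0 \<le> x s" and w_eq: "w = lincomb x S"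
      unfolding cone_gen_def by blast
    then have "(\<Sum>b\<in>S - {s}. x b) = 0" using w pairing_m by simp
    then have "\<forall>b\<in>S - {s}. x b = 0"
      using sum_nonneg_eq_0_iff[of "S - {s}" x] x finite_gens by simp
    then have "w = lincomb (\<lambda>s'. if s' = s then x s else 0) S"
      unfolding w_eq by (auto intro!: sum.cong)
    then show "w \<in> cone_gen {s}"
      using x s lincomb_indicator[OF finite_gens s] by (auto simp: mem_cone_gen_singleton)
  qed
  moreover have "m \<in> vsp r" by (simp add: m_def vsp_def)
  moreover have "0 \<le> pairing r m w" if "w \<in> cone_gen S" for w
    using that unfolding cone_gen_def by (auto simp: pairing_m intro!: sum_nonneg)
  ultimately show ?thesis unfolding cone_face_def by (intro bexI[of _ m]) auto
qed

end

lemma crepant_resolution_decomposition: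
  assumes res: "has_crepant_full_resolution r l a"
    and ones: "\<And>i. i < r \<Longrightarrow> \<exists>j<r. j \<noteq> i \<and> a j = 1"
    and v: "v \<in> lattice_NG r l a" "v \<in> pos_orthant r"
  obtains S and c :: "(nat \<Rightarrow> real) \<Rightarrow> nat"
  where "finite S"
    and "\<And>s. s \<in> S \<Longrightarrow> s \<in> lattice_NG r l a \<and> s \<in> pos_orthant r \<and> (\<Sum>i<r. s i) = 1"
    and "v = lincomb (\<lambda>s. real (c s)) S"
proof -
  obtain \<Delta> where fan: "is_fan r (lattice_NG r l a) \<Delta>"
    and ref: "refines \<Delta> (face_fan r (pos_orthant r))"
    and smooth: "smooth_fan (lattice_NG r l a) \<Delta>"
    and crep: "crepant r (lattice_NG r l a) (face_fan r (pos_orthant r)) \<Delta>"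
    using res unfolding has_crepant_full_resolution_def Let_def by blast
  have support: "\<Union>\<Delta> = pos_orthant r"
    using ref unfolding refines_def by (simp add: Union_face_fan)
  obtain \<sigma> where \<sigma>: "\<sigma> \<in> \<Delta>" "v \<in> \<sigma>" using v support by blast
  obtain B S where basis: "lattice_basis (lattice_NG r l a) B" and "S \<subseteq> B"
    and \<sigma>_eq: "\<sigma> = cone_gen S"
    using smooth \<sigma> unfolding smooth_fan_def by blast
  obtain u where "lattice_cone_coordinates r (lattice_NG r l a) S u"
    using lattice_basis_cone_coordinates[OF basis \<open>S \<subseteq> B\<close> lattice_NG_subset_vsp
        unit_vec_in_lattice_NG] .
  then interpret lattice_cone_coordinates r "lattice_NG r l a" S u .
  have "s \<in> lattice_NG r l a \<and> s \<in> pos_orthant r \<and> (\<Sum>i<r. s i) = 1" if s: "s \<in> S" for s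
  proof (intro conjI)
    show "s \<in> lattice_NG r l a" using s \<open>S \<subseteq> B\<close> basis unfolding lattice_basis_def by blast
    then have "prim_gen (lattice_NG r l a) (cone_gen {s}) s" using prim_gen_ray s by blast
    moreover have "cone_gen {s} \<in> \<Delta>"
      using fan \<sigma> \<sigma>_eq cone_face_ray[OF s] unfolding is_fan_def by blast
    moreover have "is_ray (cone_gen {s})" using gen_nonzero[OF s] unfolding is_ray_def by blast
    ultimately show "(\<Sum>i<r. s i) = 1" using crepant_prim_gen_coord_sum[OF crep ones] by blast
    show "s \<in> pos_orthant r" using gen_in_cone[OF s] \<sigma> \<sigma>_eq support by blast
  qed
  moreover obtain c where "v = lincomb (\<lambda>s. real (c s)) S"
    using lattice_point_nat_coeffs[OF _ v(1)] \<sigma> \<sigma>_eq by blast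
  ultimately show ?thesis by (rule that[OF finite_gens])
qed

lemma of_int_mult_divide_in_Ints_iff:
  assumes "0 < l"
  shows "of_int k * real a / real l \<in> \<int> \<longleftrightarrow> int l dvd k * int a"
  using of_int_div_of_int_in_Ints_iff[of "k * int a" "int l", where 'a = real] assms by simp

lemma dvd_mult_gcd_int:
  fixes l k a b :: int
  assumes "l dvd k * a" and "l dvd k * b"
  shows "l dvd k * gcd a b"
proof -
  have "l dvd gcd (k * a) (k * b)" using assms by simp
  then show ?thesis by (simp add: gcd_mult_left)
qed

lemma lattice_NG_unit_weight_coords_eq:
  assumes "s \<in> lattice_NG r l a" "i < r" "j < r" "a i = 1" "a j = 1"
    and "0 \<le> s i" "s i < 1" "0 \<le> s j" "s j < 1"
  shows "s i = s j"
proof -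
  obtain k where k: "\<forall>i<r. s i - of_int k * real (a i) / real l \<in> \<int>"
    using assms(1) unfolding lattice_NG_def by blast
  have "s i - s j = (s i - of_int k / real l) - (s j - of_int k / real l)" by simp
  also have "\<dots> \<in> \<int>" by (rule Ints_diff) (use k assms(2-5) in auto)
  finally show ?thesis using assms(6-9) Ints_nonzero_abs_less1[of "s i - s j"] by auto
qed

lemma lattice_NG_vanishing_coord_dvd:
  assumes "\<forall>i<r. s i - of_int k * real (a i) / real l \<in> \<int>" "p < r" "s p = 0" "0 < l"
  shows "int l dvd k * int (a p)"
proof -
  have "s p - of_int k * real (a p) / real l \<in> \<int>" using assms(1,2) by blast
  then have "of_int k * real (a p) / real l \<in> \<int>"
    using assms(3) by (metis Ints_minus diff_0 minus_minus)
  then show ?thesis using assms(4) of_int_mult_divide_in_Ints_iff by blast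
qed

lemma lattice_NG_unit_weight_coord_denominator:
  assumes "\<forall>i<r. s i - of_int k * real (a i) / real l \<in> \<int>" "i < r" "a i = 1"
    and "int l dvd k * int d" "0 < l"
  shows "real d * s i \<in> \<int>"
proof -
  have "s i - of_int k / real l \<in> \<int>" using assms(1-3) by auto
  then have "real d * (s i - of_int k / real l) \<in> \<int>" by (rule Ints_mult[OF Ints_of_nat])
  moreover have "of_int k * real d / real l \<in> \<int>"
    using assms(4,5) of_int_mult_divide_in_Ints_iff by blast
  ultimately have "real d * (s i - of_int k / real l) + of_int k * real d / real l \<in> \<int>"
    by (rule Ints_add)
  then show ?thesis by (simp add: algebra_simps)
qed

locale crepant_type_weights =
  fixes r n l \<alpha> \<beta> :: nat
  assumes r_eq: "r = Suc (Suc n)" and two_le_n: "2 \<le> n"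
    and weights_sum: "\<alpha> + \<beta> + n = l"
    and resolution: "has_crepant_full_resolution r l (type_weights r \<alpha> \<beta>)"
begin

abbreviation weight :: "nat \<Rightarrow> nat" where
  "weight \<equiv> type_weights r \<alpha> \<beta>"

lemma weight_less_n [simp]: "i < n \<Longrightarrow> weight i = 1"
  and weight_n [simp]: "weight n = \<alpha>"
  and weight_Suc_n [simp]: "weight (Suc n) = \<beta>"
  by (simp_all add: type_weights_def r_eq)

lemma l_pos: "0 < l"
  using weights_sum two_le_n by simp

lemma less_n_imp_less_r: "i < n \<Longrightarrow> i < r"
  and n_less_r: "n < r" and Suc_n_less_r: "Suc n < r"
  by (simp_all add: r_eq)

lemma less_r_cases: "i < r \<Longrightarrow> i < n \<or> i = n \<or> i = Suc n"
  by (auto simp: r_eq less_Suc_eq)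

lemma sum_coords: "(\<Sum>i<r. f i) = (\<Sum>i<n. f i) + f n + f (Suc n)"
  by (simp add: r_eq)

lemma decomposition:
  assumes v: "v \<in> lattice_NG r l weight" "v \<in> pos_orthant r"
  obtains S and c :: "(nat \<Rightarrow> real) \<Rightarrow> nat"
  where "finite S"
    and "\<And>s. s \<in> S \<Longrightarrow> s \<in> lattice_NG r l weight \<and> s \<in> pos_orthant r \<and> (\<Sum>i<r. s i) = 1"
    and "v = lincomb (\<lambda>s. real (c s)) S"
    and "\<And>s i. s \<in> S \<Longrightarrow> c s \<noteq> 0 \<Longrightarrow> i < r \<Longrightarrow> s i \<le> v i"
proof -
  have ones: "\<exists>j<r. j \<noteq> i \<and> weight j = 1" if "i < r" for i
    using two_le_n less_n_imp_less_r[of 0] less_n_imp_less_r[of 1]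
    by (intro exI[of _ "if i = 0 then 1 else 0"]) auto
  obtain S c where S: "finite S"
    and gens: "\<And>s. s \<in> S \<Longrightarrow> s \<in> lattice_NG r l weight \<and> s \<in> pos_orthant r \<and> (\<Sum>i<r. s i) = 1"
    and v_eq: "v = lincomb (\<lambda>s. real (c s)) S"
    using crepant_resolution_decomposition[OF resolution ones v] by blast
  moreover have "s i \<le> v i" if "s \<in> S" "c s \<noteq> 0" "i < r" for s i
    unfolding v_eq using coord_le_nat_lincomb[of S s c i, OF S that(1,2)] gens that(3)
    by (simp add: pos_orthant_def)
  ultimately show ?thesis by (rule that)
qed

lemma age_one_point_coords:
  assumes s: "s \<in> lattice_NG r l weight" "s \<in> pos_orthant r" "(\<Sum>i<r. s i) = 1"
    and small: "\<And>i. i < n \<Longrightarrow> s i < 1"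
  shows "real n * s 0 + s n + s (Suc n) = 1"
proof -
  have eq: "s i = s 0" if "i < n" for i
    using lattice_NG_unit_weight_coords_eq[OF s(1), of i 0] s(2) small[of i] small[of 0] that
      two_le_n less_n_imp_less_r
    by (simp add: pos_orthant_def)
  have "(\<Sum>i<n. s i) = (\<Sum>i<n. s 0)" by (rule sum.cong) (auto dest: eq)
  then show ?thesis using s(3) sum_coords[of s] by simp
qed

lemma diagonal_point_in_lattice:
  assumes "g dvd \<alpha>" "g dvd \<beta>" "g dvd l"
  shows "(\<lambda>i. if i < n then 1 / real g else 0) \<in> lattice_NG r l weight"
proof (rule lattice_NG_memI[where k = "int (l div g)"])
  show "(\<lambda>i. if i < n then 1 / real g else 0) \<in> vsp r"
    by (auto simp: vsp_def dest: less_n_imp_less_r)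
  have "0 < g" using assms(3) l_pos by (auto intro: Nat.gr0I)
  fix i assume "i < r"
  have "of_int (int (l div g)) * real (weight i) / real l = real (weight i) / real g"
    using assms(3) l_pos \<open>0 < g\<close> by (simp add: real_of_nat_div field_simps)
  moreover have "real (weight i) / real g \<in> \<int>" if "\<not> i < n"
  proof -
    have "g dvd weight i" using less_r_cases[OF \<open>i < r\<close>] that assms(1,2) by auto
    then show ?thesis by (metis Ints_of_nat real_of_nat_div)
  qed
  ultimately show "(if i < n then 1 / real g else 0) - of_int (int (l div g)) * real (weight i) / real l \<in> \<int>"
    by auto
qed

lemma n_dvd_gcd_of_age_one_point:
  assumes s: "s \<in> lattice_NG r l weight" "s \<in> pos_orthant r" "(\<Sum>i<r. s i) = 1"
    and small: "\<And>i. i < n \<Longrightarrow> s i < 1" and zero: "s n = 0" "s (Suc n) = 0"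
  shows "n dvd gcd (gcd \<alpha> \<beta>) l"
proof -
  define g where "g = gcd (gcd \<alpha> \<beta>) l"
  obtain k where k: "\<forall>i<r. s i - of_int k * real (weight i) / real l \<in> \<int>"
    using s(1) unfolding lattice_NG_def by blast
  have "int l dvd k * int \<alpha>" "int l dvd k * int \<beta>"
    using lattice_NG_vanishing_coord_dvd[OF k n_less_r zero(1) l_pos]
      lattice_NG_vanishing_coord_dvd[OF k Suc_n_less_r zero(2) l_pos]
    by simp_all
  then have "int l dvd k * int g"
    unfolding g_def by (simp add: dvd_mult_gcd_int flip: gcd_int_int_eq)
  then have "real g * s 0 \<in> \<int>"
    using two_le_n by (intro lattice_NG_unit_weight_coord_denominator[OF k _ _ _ l_pos])
      (auto intro: less_n_imp_less_r)
  moreover have "s 0 = 1 / real n"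
    using age_one_point_coords[OF s small] zero two_le_n by (simp add: field_simps)
  ultimately have "of_int (int g) / of_int (int n) \<in> (\<int> :: real set)"
    by simp
  then show ?thesis
    unfolding g_def[symmetric]
    using of_int_div_of_int_in_Ints_iff[of "int g" "int n", where 'a = real] two_le_n by auto
qed

lemma gcd_alpha_beta_l_cases: "gcd (gcd \<alpha> \<beta>) l \<in> {1, n}"
proof (cases "gcd (gcd \<alpha> \<beta>) l = 1")
  case False
  define g where "g = gcd (gcd \<alpha> \<beta>) l"
  have g: "g dvd \<alpha>" "g dvd \<beta>" "g dvd l" unfolding g_def by (meson dvd_trans gcd_dvd1 gcd_dvd2)+
  then have "g dvd n" using weights_sum by (metis dvd_add dvd_add_right_iff)
  have "g \<noteq> 1" "0 < g" using False l_pos by (simp_all add: g_def)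
  then have "2 \<le> g" by linarith
  define v where "v = (\<lambda>i. if i < n then 1 / real g else 0)"
  have v_lattice: "v \<in> lattice_NG r l weight"
    unfolding v_def by (rule diagonal_point_in_lattice[OF g])
  have v_pos: "v \<in> pos_orthant r"
    by (auto simp: v_def pos_orthant_def vsp_def dest: less_n_imp_less_r)
  obtain S c where "finite S"
    and gens: "\<And>s. s \<in> S \<Longrightarrow> s \<in> lattice_NG r l weight \<and> s \<in> pos_orthant r \<and> (\<Sum>i<r. s i) = 1"
    and v_eq: "v = lincomb (\<lambda>s. real (c s)) S"
    and below: "\<And>s i. s \<in> S \<Longrightarrow> c s \<noteq> 0 \<Longrightarrow> i < r \<Longrightarrow> s i \<le> v i"
    using decomposition[OF v_lattice v_pos] by blast
  have "v 0 \<noteq> 0" using two_le_n \<open>2 \<le> g\<close> by (simp add: v_def)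
  then obtain s where s: "s \<in> S" "c s \<noteq> 0"
    using v_eq by (metis (no_types, lifting) of_nat_0 mult_zero_left sum.neutral)
  have bounds: "0 \<le> s i" "s i \<le> v i" if "i < r" for i
    using gens[OF s(1)] below[OF s that] that by (auto simp: pos_orthant_def)
  have "1 / real g < 1" using \<open>2 \<le> g\<close> by simp
  have "n dvd g"
    unfolding g_def
  proof (rule n_dvd_gcd_of_age_one_point)
    show "s \<in> lattice_NG r l weight" "s \<in> pos_orthant r" "(\<Sum>i<r. s i) = 1"
      using gens[OF s(1)] by auto
    show "s i < 1" if "i < n" for i
      using bounds(2)[OF less_n_imp_less_r[OF that]] that \<open>1 / real g < 1\<close> by (simp add: v_def)
    show "s n = 0" "s (Suc n) = 0"
      using bounds[OF n_less_r] bounds[OF Suc_n_less_r] by (simp_all add: v_def)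
  qed
  then show ?thesis using \<open>g dvd n\<close> unfolding g_def by (simp add: dvd_antisym)
qed simp

lemma weight_pair_sum: "{p, q} = {n, Suc n} \<Longrightarrow> weight p + weight q + n = l"
  using weights_sum by (auto simp: doubleton_eq_iff)

text \<open>For \<open>t = gcd (weight p) l\<close> this is the point \<open>((t - 1) / t) (1, \<dots>, 1, weight p, weight q)\<close>
  reduced modulo \<open>\<int>\<^sup>r\<close>, using \<open>weight q \<equiv> -n (mod t)\<close>.\<close>

lemma fractional_point_in_lattice:
  assumes pq: "{p, q} = {n, Suc n}" and t: "t = gcd (weight p) l"
  shows "(\<lambda>i. if i < n then (real t - 1) / real t else if i = q then real n / real t else 0)
           \<in> lattice_NG r l weight"
proof (rule lattice_NG_memI[where k = "int ((t - 1) * (l div t))"])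
  have "0 < t" and t_p: "t dvd weight p" and t_l: "t dvd l" using t l_pos by auto
  have t_q: "t dvd weight q + n"
    using t_p t_l weight_pair_sum[OF pq] by (metis add.assoc dvd_add_right_iff)
  have frac: "of_int (int ((t - 1) * (l div t))) * real x / real l = (real t - 1) * real x / real t"
    for x
    using t_l l_pos \<open>0 < t\<close> by (simp add: real_of_nat_div field_simps)
  show "(\<lambda>i. if i < n then (real t - 1) / real t else if i = q then real n / real t else 0) \<in> vsp r"
    using pq n_less_r Suc_n_less_r by (auto simp: vsp_def doubleton_eq_iff dest: less_n_imp_less_r)
  fix i assume "i < r"
  then consider "i < n" | "i = p" | "i = q" using less_r_cases pq by (auto simp: doubleton_eq_iff)
  then show "(if i < n then (real t - 1) / real t else if i = q then real n / real t else 0)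
      - of_int (int ((t - 1) * (l div t))) * real (weight i) / real l \<in> \<int>"
  proof cases
    case 2
    have "(real t - 1) * real (weight p) / real t = real (t - 1) * real (weight p div t)"
      using t_p \<open>0 < t\<close> by (simp add: real_of_nat_div)
    then show ?thesis using 2 pq unfolding frac by (auto simp: doubleton_eq_iff)
  next
    case 3
    have "real n / real t - (real t - 1) * real (weight q) / real t
        = real ((weight q + n) div t) - real (weight q)"
      using t_q \<open>0 < t\<close> by (simp add: real_of_nat_div field_simps)
    then show ?thesis using 3 pq unfolding frac by (auto simp: doubleton_eq_iff)
  qed (use frac[of 1] in simp)
qed

lemma age_one_point_bound:
  assumes s: "s \<in> lattice_NG r l weight" "s \<in> pos_orthant r" "(\<Sum>i<r. s i) = 1"
    and small: "\<And>i. i < n \<Longrightarrow> s i < 1"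
    and p: "p \<in> {n, Suc n}" "s p = 0"
  shows "real (gcd (weight p) l) * s 0 \<le> real (gcd (weight p) l div n)"
proof -
  define t where "t = gcd (weight p) l"
  obtain k where k: "\<forall>i<r. s i - of_int k * real (weight i) / real l \<in> \<int>"
    using s(1) unfolding lattice_NG_def by blast
  have "p < r" using p(1) n_less_r Suc_n_less_r by auto
  have "int l dvd k * int (weight p)"
    by (rule lattice_NG_vanishing_coord_dvd[OF k \<open>p < r\<close> p(2) l_pos])
  then have "int l dvd k * int t"
    unfolding t_def using dvd_mult_gcd_int[of "int l" k "int (weight p)" "int l"]
    by (simp flip: gcd_int_int_eq)
  then have "real t * s 0 \<in> \<int>"
    using two_le_n by (intro lattice_NG_unit_weight_coord_denominator[OF k _ _ _ l_pos])
      (auto intro: less_n_imp_less_r)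
  then obtain z :: int where z: "real t * s 0 = of_int z" by (auto elim: Ints_cases)
  have "0 \<le> s 0" using s(2) less_n_imp_less_r two_le_n by (simp add: pos_orthant_def)
  then have "0 \<le> z" using z by (metis of_int_0_le_iff of_nat_0_le_iff zero_le_mult_iff)
  then have "real t * s 0 = real (nat z)" using z by simp
  then obtain j :: nat where j: "real t * s 0 = real j" by blast
  have "0 \<le> s n" "0 \<le> s (Suc n)" using s(2) n_less_r Suc_n_less_r by (auto simp: pos_orthant_def)
  then have "real n * s 0 \<le> 1" using age_one_point_coords[OF s small] p by auto
  have "real (n * j) = real t * (real n * s 0)" using j by (simp add: algebra_simps)
  also have "\<dots> \<le> real t" using \<open>real n * s 0 \<le> 1\<close> by (simp add: mult_left_le)
  finally have "n * j \<le> t" by (simp only: of_nat_le_iff)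
  then have "j \<le> t div n" using two_le_n by (simp add: less_eq_div_iff_mult_less_eq mult.commute)
  then show ?thesis using j unfolding t_def by simp
qed

lemma fractional_point_summand_bound:
  assumes pq: "{p, q} = {n, Suc n}" and t: "t = gcd (weight p) l"
    and s: "s \<in> lattice_NG r l weight" "s \<in> pos_orthant r" "(\<Sum>i<r. s i) = 1"
    and below: "\<And>i. i < r \<Longrightarrow>
      s i \<le> (if i < n then (real t - 1) / real t else if i = q then real n / real t else 0)"
  shows "real t * s 0 \<le> real (t div n)"
proof -
  have "(real t - 1) / real t < 1" using t l_pos by simp
  then have "s i < 1" if "i < n" for i
    using below[OF less_n_imp_less_r[OF that]] that by simp
  moreover have "p \<in> {n, Suc n}" "p \<noteq> q" "p < r"
    using pq n_less_r Suc_n_less_r by (auto simp: doubleton_eq_iff)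
  then have "s p = 0" using below[of p] s(2) by (force simp: pos_orthant_def)
  ultimately show ?thesis using age_one_point_bound[OF s] \<open>p \<in> {n, Suc n}\<close> t by simp
qed

lemma gcd_weight_mod_le_one:
  assumes pq: "{p, q} = {n, Suc n}"
  shows "gcd (weight p) l mod n \<le> 1"
proof -
  define t where "t = gcd (weight p) l"
  have "0 < t" using l_pos by (simp add: t_def)
  define v where "v = (\<lambda>i. if i < n then (real t - 1) / real t else if i = q then real n / real t else 0)"
  have v_lattice: "v \<in> lattice_NG r l weight"
    unfolding v_def by (rule fractional_point_in_lattice[OF pq t_def])
  have v_pos: "v \<in> pos_orthant r"
    using pq \<open>0 < t\<close> n_less_r Suc_n_less_r
    by (auto simp: v_def pos_orthant_def vsp_def doubleton_eq_iff dest: less_n_imp_less_r)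
  obtain S c where "finite S"
    and gens: "\<And>s. s \<in> S \<Longrightarrow> s \<in> lattice_NG r l weight \<and> s \<in> pos_orthant r \<and> (\<Sum>i<r. s i) = 1"
    and v_eq: "v = lincomb (\<lambda>s. real (c s)) S"
    and below: "\<And>s i. s \<in> S \<Longrightarrow> c s \<noteq> 0 \<Longrightarrow> i < r \<Longrightarrow> s i \<le> v i"
    using decomposition[OF v_lattice v_pos] by blast
  have "(\<Sum>s\<in>S. real (c s)) = (\<Sum>i<r. v i)"
    unfolding v_eq using gens by (intro coord_sum_nat_lincomb[symmetric]) blast
  also have "\<dots> = real n"
    using pq \<open>0 < t\<close> unfolding sum_coords v_def by (auto simp: doubleton_eq_iff field_simps)
  finally have sum_c: "(\<Sum>s\<in>S. real (c s)) = real n" .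
  have "real (c s) * (real t * s 0) \<le> real (c s) * real (t div n)" if "s \<in> S" for s
  proof (cases "c s = 0")
    case False
    then have "real t * s 0 \<le> real (t div n)"
      using fractional_point_summand_bound[OF pq t_def] gens[OF that] below[OF that]
      unfolding v_def by blast
    then show ?thesis by (simp add: mult_left_mono)
  qed simp
  then have "real t * v 0 \<le> real n * real (t div n)"
    unfolding v_eq sum_c[symmetric] by (simp add: sum_distrib_left sum_distrib_right sum_mono mult_ac)
  moreover have "real t * v 0 = real t - 1" using two_le_n \<open>0 < t\<close> by (simp add: v_def)
  ultimately have "real t \<le> real (n * (t div n) + 1)" by simp
  then have "t \<le> n * (t div n) + 1" by (simp only: of_nat_le_iff)
  then show ?thesis unfolding t_def[symmetric] by (metis add_le_cancel_left div_mult_mod_eq mult.commute)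
qed

lemma gcd_weight_mod_eq_one:
  assumes coprime: "gcd (gcd \<alpha> \<beta>) l = 1" and pq: "{p, q} = {n, Suc n}"
  shows "gcd (weight p) l mod n = 1"
proof -
  have "\<not> n dvd gcd (weight p) l"
  proof
    assume "n dvd gcd (weight p) l"
    then have "n dvd weight p" "n dvd l" by (meson dvd_trans gcd_dvd1 gcd_dvd2)+
    moreover from this have "n dvd weight q"
      using weight_pair_sum[OF pq] by (metis dvd_add_left_iff dvd_add_right_iff dvd_refl)
    ultimately have "n dvd gcd (gcd \<alpha> \<beta>) l" using pq by (auto simp: doubleton_eq_iff)
    then show False using coprime two_le_n by simp
  qed
  then show ?thesis using gcd_weight_mod_le_one[OF pq] by (simp add: dvd_eq_mod_eq_0 le_Suc_eq)
qed

lemma gcd_beta_l: "gcd \<beta> l = gcd (\<alpha> + n) l"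
proof -
  have "l = \<beta> + (\<alpha> + n)" "l = (\<alpha> + n) + \<beta>" using weights_sum by simp_all
  then show ?thesis by (metis gcd_add2 gcd.commute)
qed

end

theorem lemma6p20:
  fixes r l \<alpha> \<beta> :: nat
  assumes "r \<ge> 4" and "l \<ge> r" and "\<alpha> \<ge> 1" and "\<beta> \<ge> 1"
    and "\<alpha> + \<beta> = l - (r - 2)"
    and "has_crepant_full_resolution r l (type_weights r \<alpha> \<beta>)"
  shows "gcd (gcd \<alpha> \<beta>) l \<in> {1, r - 2} \<and>
         gcd \<beta> l = gcd (\<alpha> + (r - 2)) l \<and>
         (gcd (gcd \<alpha> \<beta>) l = 1 \<longrightarrow>
            gcd \<alpha> l mod (r - 2) = 1 \<and> gcd \<beta> l mod (r - 2) = 1)"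
proof -
  interpret crepant_type_weights r "r - 2" l \<alpha> \<beta>
    using assms(1,2,5,6) by unfold_locales auto
  have "gcd \<alpha> l mod (r - 2) = 1 \<and> gcd \<beta> l mod (r - 2) = 1" if "gcd (gcd \<alpha> \<beta>) l = 1"
    using gcd_weight_mod_eq_one[OF that, of "r - 2" "Suc (r - 2)"]
      gcd_weight_mod_eq_one[OF that, of "Suc (r - 2)" "r - 2"]
    by (simp add: insert_commute)
  then show ?thesis using gcd_alpha_beta_l_cases gcd_beta_l by blast
qed

end
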